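(* Let $X,Y$ be exponential vector spaces over a field $K$ and $\phi:X\to Y$ an order-isomorphism. Then (1) for any generator $B$ of $X\smallsetminus X_0$, $\phi(B)$ is a generator of $Y\smallsetminus Y_0$; (2) for any orderly independent subset $B$ of $X\smallsetminus X_0$, $\phi(B)$ is an orderly independent subset of $Y\smallsetminus Y_0$. Consequently, for any basis $B$ of $X\smallsetminus X_0$, $\phi(B)$ is a basis of $Y\smallsetminus Y_0$.
   Context: An exponential vector space (evs) over a field $K$ is a partially ordered set $(X,\leq)$ with a binary operation $+$ on $X$ and a map $K\times X\to X$, $(\alpha,x)\mapsto \alpha x$, such that: (A1) $(X,+)$ is a commutative semigroup with identity $\theta$; (A2) $x\leq y$ implies $x+z\leq y+z$ and $\alpha x\leq \alpha y$ for all $z\in X$, $\alpha\in K$; (A3) $\alpha(x+y)=\alpha x+\alpha y$, $\alpha(\beta x)=(\alpha\beta)x$, $(\alpha+\beta)x\leq \alpha x+\beta x$, $1x=x$; (A4) $\alpha x=\theta$ iff $\alpha=0$ or $x=\theta$; (A5) $x+(-1)x=\theta$ iff $x\in X_0$, where $X_0:=\{z\in X: y\not\leq z \text{ for all } y\in X\smallsetminus\{z\}\}$ (the set of minimal elements, called the primitive space); (A6) for each $x\in X$ there is $p\in X_0$ with $p\leq x$. An order-morphism $f:X\to Y$ is a map with $f(x+y)=f(x)+f(y)$, $f(\alpha x)=\alpha f(x)$, $x\leq y\Rightarrow f(x)\leq f(y)$, and such that for $p,q\in f(X)$ with $p\leq q$ one has $f^{-1}(p)\subseteq\{z: z\leq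 w \text{ for some } w\in f^{-1}(q)\}$ and $f^{-1}(q)\subseteq\{z: z\geq w \text{ for some } w\in f^{-1}(p)\}$; an order-isomorphism is a bijective order-morphism. For $x\in X\smallsetminus X_0$ let $L(x):=\{z\in X: z\geq \alpha x+p \text{ for some } \alpha\in K\smallsetminus\{0\},\ p\in X_0\}$ (similarly in $Y$ with $Y_0$). A subset $B\subseteq X\smallsetminus X_0$ generates $X\smallsetminus X_0$ if $X\smallsetminus X_0=\bigcup_{b\in B}L(b)$. Elements $x,y\in X\smallsetminus X_0$ are orderly dependent if $x\in L(y)$ or $y\in L(x)$, and orderly independent otherwise; $B$ is orderly independent if any two distinct members of $B$ are orderly independent. A basis of $X\smallsetminus X_0$ is an orderly independent generating subset of $X\smallsetminus X_0$. *)

theory Defs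
  imports Main
begin

text \<open>An exponential vector space over a field 'k, with underlying set the whole type 'a.\<close>
record ('k, 'a) evs_struct =
  ev_le :: "'a \<Rightarrow> 'a \<Rightarrow> bool"
  ev_add :: "'a \<Rightarrow> 'a \<Rightarrow> 'a"
  ev_smul :: "'k \<Rightarrow> 'a \<Rightarrow> 'a"
  ev_zero :: "'a"

definition prim :: "('k, 'a) evs_struct \<Rightarrow> 'a set" where
  "prim X = {z. \<forall>y. y \<noteq> z \<longrightarrow> \<not> ev_le X y z}"

definition evs :: "('k::field, 'a) evs_struct \<Rightarrow> bool" where
  "evs X \<longleftrightarrow>
     (\<forall>x. ev_le X x x) \<and>
     (\<forall>x y. ev_le X x y \<and> ev_le X y x \<longrightarrow> x = y) \<and>
     (\<forall>x y z. ev_le X x y \<and> ev_le X y z \<longrightarrow> ev_le X x z) \<and>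
     \<comment> \<open>A1\<close>
     (\<forall>x y z. ev_add X (ev_add X x y) z = ev_add X x (ev_add X y z)) \<and>
     (\<forall>x y. ev_add X x y = ev_add X y x) \<and>
     (\<forall>x. ev_add X x (ev_zero X) = x) \<and>
     \<comment> \<open>A2\<close>
     (\<forall>x y z. ev_le X x y \<longrightarrow> ev_le X (ev_add X x z) (ev_add X y z)) \<and>
     (\<forall>x y a. ev_le X x y \<longrightarrow> ev_le X (ev_smul X a x) (ev_smul X a y)) \<and>
     \<comment> \<open>A3\<close>
     (\<forall>a x y. ev_smul X a (ev_add X x y) = ev_add X (ev_smul X a x) (ev_smul X a y)) \<and>
     (\<forall>a b x. ev_smul X a (ev_smul X b x) = ev_smul X (a * b) x) \<and>
     (\<forall>a b x. ev_le X (ev_smul X (a + b) x) (ev_add X (ev_smul X a x) (ev_smul X b x))) \<and>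
     (\<forall>x. ev_smul X 1 x = x) \<and>
     \<comment> \<open>A4\<close>
     (\<forall>a x. ev_smul X a x = ev_zero X \<longleftrightarrow> a = 0 \<or> x = ev_zero X) \<and>
     \<comment> \<open>A5\<close>
     (\<forall>x. ev_add X x (ev_smul X (-1) x) = ev_zero X \<longleftrightarrow> x \<in> prim X) \<and>
     \<comment> \<open>A6\<close>
     (\<forall>x. \<exists>p\<in>prim X. ev_le X p x)"

definition Lset :: "('k::field, 'a) evs_struct \<Rightarrow> 'a \<Rightarrow> 'a set" where
  "Lset X x = {z. \<exists>a p. a \<noteq> 0 \<and> p \<in> prim X \<and> ev_le X (ev_add X (ev_smul X a x) p) z}"

definition generates :: "('k::field, 'a) evs_struct \<Rightarrow> 'a set \<Rightarrow> bool" where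
  "generates X B \<longleftrightarrow> B \<subseteq> - prim X \<and> - prim X = (\<Union>b\<in>B. Lset X b)"

definition orderly_dependent :: "('k::field, 'a) evs_struct \<Rightarrow> 'a \<Rightarrow> 'a \<Rightarrow> bool" where
  "orderly_dependent X x y \<longleftrightarrow> x \<in> Lset X y \<or> y \<in> Lset X x"

definition orderly_independent_set :: "('k::field, 'a) evs_struct \<Rightarrow> 'a set \<Rightarrow> bool" where
  "orderly_independent_set X B \<longleftrightarrow> B \<subseteq> - prim X \<and>
     (\<forall>x\<in>B. \<forall>y\<in>B. x \<noteq> y \<longrightarrow> \<not> orderly_dependent X x y)"

definition is_basis :: "('k::field, 'a) evs_struct \<Rightarrow> 'a set \<Rightarrow> bool" where
  "is_basis X B \<longleftrightarrow> orderly_independent_set X B \<and> generates X B"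

definition order_morphism ::
  "('k::field, 'a) evs_struct \<Rightarrow> ('k, 'b) evs_struct \<Rightarrow> ('a \<Rightarrow> 'b) \<Rightarrow> bool" where
  "order_morphism X Y f \<longleftrightarrow>
     (\<forall>x y. f (ev_add X x y) = ev_add Y (f x) (f y)) \<and>
     (\<forall>a x. f (ev_smul X a x) = ev_smul Y a (f x)) \<and>
     (\<forall>x y. ev_le X x y \<longrightarrow> ev_le Y (f x) (f y)) \<and>
     (\<forall>p\<in>range f. \<forall>q\<in>range f. ev_le Y p q \<longrightarrow>
        f -` {p} \<subseteq> {z. \<exists>w\<in>f -` {q}. ev_le X z w} \<and>
        f -` {q} \<subseteq> {z. \<exists>w\<in>f -` {p}. ev_le X w z})"

definition order_isomorphism ::
  "('k::field, 'a) evs_struct \<Rightarrow> ('k, 'b) evs_struct \<Rightarrow> ('a \<Rightarrow> 'b) \<Rightarrow> bool" where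
  "order_isomorphism X Y f \<longleftrightarrow> bij f \<and> order_morphism X Y f"

end

theory Submission
  imports Defs
begin

text \<open>
  An injective order-morphism reflects the order: if \<open>\<phi> x \<le> \<phi> y\<close>, the preimage condition
  puts \<open>x\<close> below some preimage of \<open>\<phi> y\<close>, which can only be \<open>y\<close>. A bijective order-morphism is
  therefore an isomorphism of the posets that also commutes with \<open>+\<close> and scalar
  multiplication, so it maps minimal elements, the sets \<open>L(x)\<close>, and hence generating and
  orderly independent sets onto their counterparts. None of the axioms of an exponential
  vector space is needed.
\<close>

lemma order_morphism_le_iff:
  assumes "order_morphism X Y f" and "inj f"
  shows "ev_le Y (f x) (f y) \<longleftrightarrow> ev_le X x y"
proof
  assume "ev_le Y (f x) (f y)"
  with assms(1) have "f -` {f x} \<subseteq> {z. \<exists>w\<in>f -` {f y}. ev_le X z w}"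
    unfolding order_morphism_def by blast
  then obtain w where "f w = f y" and "ev_le X x w" by auto
  with \<open>inj f\<close> show "ev_le X x y" by (metis injD)
next
  assume "ev_le X x y"
  with assms(1) show "ev_le Y (f x) (f y)" by (simp add: order_morphism_def)
qed

lemma order_isomorphism_le_iff:
  assumes "order_isomorphism X Y f"
  shows "ev_le Y (f x) (f y) \<longleftrightarrow> ev_le X x y"
  using assms order_morphism_le_iff[of X Y f] by (simp add: order_isomorphism_def bij_is_inj)

lemma order_isomorphism_prim_iff:
  assumes "order_isomorphism X Y f"
  shows "f x \<in> prim Y \<longleftrightarrow> x \<in> prim X"
proof -
  from assms have "bij f" by (simp add: order_isomorphism_def)
  then have "(\<forall>v. v \<noteq> f x \<longrightarrow> \<not> ev_le Y v (f x)) \<longleftrightarrow>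
      (\<forall>u. f u \<noteq> f x \<longrightarrow> \<not> ev_le Y (f u) (f x))"
    by (metis bij_pointE)
  also have "\<dots> \<longleftrightarrow> (\<forall>u. u \<noteq> x \<longrightarrow> \<not> ev_le X u x)"
    using \<open>bij f\<close> order_isomorphism_le_iff[OF assms] by (metis bij_is_inj injD)
  finally show ?thesis by (simp add: prim_def)
qed

lemma order_isomorphism_Lset_iff:
  assumes "order_isomorphism X Y f"
  shows "f z \<in> Lset Y (f x) \<longleftrightarrow> z \<in> Lset X x"
proof -
  from assms have "surj f" and hom: "order_morphism X Y f"
    by (auto simp: order_isomorphism_def bij_is_surj)
  have image_combination: "ev_add Y (ev_smul Y a (f x)) (f p) = f (ev_add X (ev_smul X a x) p)"
    for a p using hom by (simp add: order_morphism_def)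
  have "f z \<in> Lset Y (f x) \<longleftrightarrow>
      (\<exists>a q. a \<noteq> 0 \<and> q \<in> prim Y \<and> ev_le Y (ev_add Y (ev_smul Y a (f x)) q) (f z))"
    by (simp add: Lset_def)
  also have "\<dots> \<longleftrightarrow>
      (\<exists>a p. a \<noteq> 0 \<and> f p \<in> prim Y \<and> ev_le Y (ev_add Y (ev_smul Y a (f x)) (f p)) (f z))"
    using surj_f_inv_f[OF \<open>surj f\<close>] by metis
  also have "\<dots> \<longleftrightarrow> z \<in> Lset X x"
    unfolding Lset_def image_combination order_isomorphism_le_iff[OF assms]
      order_isomorphism_prim_iff[OF assms] by simp
  finally show ?thesis .
qed

lemma order_isomorphism_orderly_dependent_iff:
  assumes "order_isomorphism X Y f"
  shows "orderly_dependent Y (f x) (f y) \<longleftrightarrow> orderly_dependent X x y"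
  by (simp add: orderly_dependent_def order_isomorphism_Lset_iff[OF assms])

lemma order_isomorphism_image_nonprim:
  assumes "order_isomorphism X Y f"
  shows "f ` B \<subseteq> - prim Y \<longleftrightarrow> B \<subseteq> - prim X"
  using order_isomorphism_prim_iff[OF assms] by auto

lemma order_isomorphism_generates:
  assumes "order_isomorphism X Y f" and "generates X B"
  shows "generates Y (f ` B)"
proof -
  from assms(1) have "surj f" by (simp add: order_isomorphism_def bij_is_surj)
  have "f z \<in> - prim Y \<longleftrightarrow> f z \<in> (\<Union>b\<in>f ` B. Lset Y b)" for z
  proof -
    have "f z \<in> - prim Y \<longleftrightarrow> z \<in> - prim X"
      using order_isomorphism_prim_iff[OF assms(1)] by simp
    also have "\<dots> \<longleftrightarrow> (\<exists>b\<in>B. z \<in> Lset X b)"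
      using assms(2) by (auto simp: generates_def)
    also have "\<dots> \<longleftrightarrow> f z \<in> (\<Union>b\<in>f ` B. Lset Y b)"
      using order_isomorphism_Lset_iff[OF assms(1)] by simp
    finally show ?thesis .
  qed
  with \<open>surj f\<close> have "- prim Y = (\<Union>b\<in>f ` B. Lset Y b)"
    by (metis set_eqI surjD)
  moreover have "f ` B \<subseteq> - prim Y"
    using assms(2) order_isomorphism_image_nonprim[OF assms(1)] unfolding generates_def by blast
  ultimately show ?thesis unfolding generates_def by blast
qed

lemma order_isomorphism_orderly_independent_set:
  assumes "order_isomorphism X Y f" and "orderly_independent_set X B"
  shows "orderly_independent_set Y (f ` B)"
  using assms order_isomorphism_orderly_dependent_iff[OF assms(1)]
  by (auto simp: orderly_independent_set_def order_isomorphism_image_nonprim)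

lemma order_isomorphism_is_basis:
  assumes "order_isomorphism X Y f" and "is_basis X B"
  shows "is_basis Y (f ` B)"
  using assms order_isomorphism_generates order_isomorphism_orderly_independent_set
  unfolding is_basis_def by blast

theorem mainTheorem20:
  fixes X :: "('k::field, 'a) evs_struct" and Y :: "('k, 'b) evs_struct"
    and \<phi> :: "'a \<Rightarrow> 'b"
  assumes "evs X" and "evs Y" and "order_isomorphism X Y \<phi>"
  shows "(\<forall>B. generates X B \<longrightarrow> generates Y (\<phi> ` B)) \<and>
         (\<forall>B. orderly_independent_set X B \<longrightarrow> orderly_independent_set Y (\<phi> ` B)) \<and>
         (\<forall>B. is_basis X B \<longrightarrow> is_basis Y (\<phi> ` B))"
  using order_isomorphism_generates[OF assms(3)]
    order_isomorphism_orderly_independent_set[OF assms(3)]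
    order_isomorphism_is_basis[OF assms(3)]
  by blast

end
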